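(* Let PS1 and PS2 be pure strategies (as in the context) with $m_{PS1}$ finite, and suppose PS2 is complementary to PS1, i.e. $\Delta_{PS1}(X)<\Delta_{PS2}(X)$ for some $X\in\mathcal{S}_{\mathrm{non}}$. Then there exists a mixed strategy MS derived from PS1 and PS2 such that $m_{MS}(X)\le m_{PS1}(X)$ for every initial population $X$ and $m_{MS}(X)<m_{PS1}(X)$ for some initial population $X$.
   Context: A fitness function $f$ on a finite set is to be maximised. A metaheuristic generates populations $\Phi_0,\Phi_1,\dots$. Let $\mathcal{S}$ be the finite set of all populations, $\mathcal{S}_{\mathrm{opt}}$ those containing at least one optimal solution, $\mathcal{S}_{\mathrm{non}}=\mathcal{S}\setminus\mathcal{S}_{\mathrm{opt}}$. The sequence is a time-homogeneous Markov chain on $\mathcal{S}$ with transition probabilities $P(X,Y)=\Pr(\Phi_{t+1}=Y\mid\Phi_t=X)$, every state of $\mathcal{S}_{\mathrm{opt}}$ absorbing. The expected hitting time $m(X)\in[0,\infty]$ is the expected number of generations until first entering $\mathcal{S}_{\mathrm{opt}}$ from $\Phi_0=X$ ($m(X)=0$ on $\mathcal{S}_{\mathrm{opt}}$). A pure strategy is such a time-independent transition matrix. PS1, PS2 are pure strategies with transition matrices $P_1,P_2$ on the same $\mathcal{S}$ (with $\mathcal{S}_{\mathrm{opt}}$ absorbing), expected hitting times $m_{PS1},m_{PS2}$. A mixed strategy MS derived from PS1 and PS2 assigns to each $X\in\mathcal{S}$ probabilities $P_X(PS1)\in[0,1]$, $P_X(PS2)=1-P_X(PS1)$, and has transition matrix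 $P_{MS}(X,Y)=P_X(PS1)P_1(X,Y)+P_X(PS2)P_2(X,Y)$, with expected hitting time $m_{MS}$. With $d(X)=m_{PS1}(X)$, for $X\in\mathcal{S}_{\mathrm{non}}$: $\Delta_{PS1}(X)=d(X)-\sum_{Y\in\mathcal{S}_{\mathrm{non}}}P_1(X,Y)d(Y)$, $\Delta_{PS2}(X)=d(X)-\sum_{Y\in\mathcal{S}_{\mathrm{non}}}P_2(X,Y)d(Y)$. *)

theory Defs
  imports "HOL-Analysis.Analysis"
begin

text \<open>A pure strategy: a time-homogeneous transition matrix on the finite set S of
populations, with every state of Sopt absorbing.\<close>
definition transition_matrix :: "'a set \<Rightarrow> 'a set \<Rightarrow> ('a \<Rightarrow> 'a \<Rightarrow> real) \<Rightarrow> bool" where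
  "transition_matrix S Sopt P \<longleftrightarrow>
     (\<forall>X\<in>S. \<forall>Y\<in>S. 0 \<le> P X Y) \<and>
     (\<forall>X\<in>S. (\<Sum>Y\<in>S. P X Y) = 1) \<and>
     (\<forall>X\<in>Sopt. P X X = 1)"

text \<open>surv N P t X = Pr(Phi_0, ..., Phi_t all lie in N | Phi_0 = X),
  i.e. with N = S_non, the probability that the hitting time of S_opt exceeds t.\<close>
fun surv :: "'a set \<Rightarrow> ('a \<Rightarrow> 'a \<Rightarrow> real) \<Rightarrow> nat \<Rightarrow> 'a \<Rightarrow> real" where
  "surv N P 0 X = (if X \<in> N then 1 else 0)"
| "surv N P (Suc t) X = (if X \<in> N then (\<Sum>Y\<in>N. P X Y * surv N P t Y) else 0)"

text \<open>Expected hitting time of S_opt (values in [0,\<infinity>]), via E[T] = sum_{t\<ge>0} Pr(T > t).\<close>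
definition hit_time :: "'a set \<Rightarrow> 'a set \<Rightarrow> ('a \<Rightarrow> 'a \<Rightarrow> real) \<Rightarrow> 'a \<Rightarrow> ennreal" where
  "hit_time S Sopt P X = (\<Sum>t. ennreal (surv (S - Sopt) P t X))"

definition mixed :: "('a \<Rightarrow> real) \<Rightarrow> ('a \<Rightarrow> 'a \<Rightarrow> real) \<Rightarrow> ('a \<Rightarrow> 'a \<Rightarrow> real) \<Rightarrow> 'a \<Rightarrow> 'a \<Rightarrow> real" where
  "mixed p P1 P2 X Y = p X * P1 X Y + (1 - p X) * P2 X Y"

definition drift :: "'a set \<Rightarrow> 'a set \<Rightarrow> ('a \<Rightarrow> real) \<Rightarrow> ('a \<Rightarrow> 'a \<Rightarrow> real) \<Rightarrow> 'a \<Rightarrow> real" where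
  "drift S Sopt d P X = d X - (\<Sum>Y\<in>S - Sopt. P X Y * d Y)"

end

theory Submission
  imports Defs
begin

text \<open>The expected hitting time d = m_PS1 solves the first-step equation
  d X = 1 + (\<Sum>Y\<in>S_non. P1 X Y * d Y) on S_non. Complementarity at X0 means
  (\<Sum>Y\<in>S_non. P2 X0 Y * d Y) < (\<Sum>Y\<in>S_non. P1 X0 Y * d Y), so the mixed strategy that plays
  PS2 at X0 and PS1 elsewhere has a transition matrix Q with 1 + Q d \<le> d on S_non, strictly
  at X0. Any nonnegative such supersolution d bounds all partial sums of the survival
  probabilities under Q, hence bounds the expected hitting time under Q; one further step
  of the recursion at X0 gives the strict inequality there.\<close>

lemma surv_nonneg:
  assumes "\<forall>X\<in>N. \<forall>Y\<in>N. 0 \<le> Q X Y"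
  shows "0 \<le> surv N Q t X"
  using assms by (induction t arbitrary: X) (auto intro!: sum_nonneg)

lemma surv_notin: "X \<notin> N \<Longrightarrow> surv N Q t X = 0"
  by (cases t) auto

lemma sum_surv_lessThan_Suc:
  assumes "X \<in> N"
  shows "(\<Sum>t<Suc n. surv N Q t X) = 1 + (\<Sum>Y\<in>N. Q X Y * (\<Sum>t<n. surv N Q t Y))"
proof -
  have "(\<Sum>t<Suc n. surv N Q t X) = surv N Q 0 X + (\<Sum>t<n. surv N Q (Suc t) X)"
    by (rule sum.lessThan_Suc_shift)
  also have "\<dots> = 1 + (\<Sum>t<n. \<Sum>Y\<in>N. Q X Y * surv N Q t Y)"
    using assms by simp
  also have "\<dots> = 1 + (\<Sum>Y\<in>N. Q X Y * (\<Sum>t<n. surv N Q t Y))"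
    by (simp add: sum_distrib_left sum.swap[of _ "{..<n}"])
  finally show ?thesis .
qed

lemma sum_surv_le_supersolution:
  assumes Q: "\<forall>X\<in>N. \<forall>Y\<in>N. 0 \<le> Q X Y" and d: "\<And>X. 0 \<le> d X"
    and super: "\<forall>X\<in>N. 1 + (\<Sum>Y\<in>N. Q X Y * d Y) \<le> d X"
  shows "(\<Sum>t<n. surv N Q t X) \<le> d X"
proof (induction n arbitrary: X)
  case 0
  then show ?case using d by simp
next
  case (Suc n)
  show ?case
  proof (cases "X \<in> N")
    case True
    have "(\<Sum>t<Suc n. surv N Q t X) = 1 + (\<Sum>Y\<in>N. Q X Y * (\<Sum>t<n. surv N Q t Y))"
      using True by (rule sum_surv_lessThan_Suc)
    also have "\<dots> \<le> 1 + (\<Sum>Y\<in>N. Q X Y * d Y)"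
      using Suc.IH Q True by (auto intro!: sum_mono mult_left_mono)
    also have "\<dots> \<le> d X" using super True by auto
    finally show ?thesis .
  next
    case False
    then show ?thesis using d by (simp add: surv_notin)
  qed
qed

lemma suminf_ennreal_le_of_partial_sums:
  assumes "\<And>t. 0 \<le> f t" and "\<And>n. (\<Sum>t<n. f t) \<le> c"
  shows "(\<Sum>t. ennreal (f t)) \<le> ennreal c"
  unfolding suminf_eq_SUP
proof (rule SUP_least)
  fix n
  show "(\<Sum>t<n. ennreal (f t)) \<le> ennreal c"
    using assms by (simp add: ennreal_leI)
qed

lemma hit_time_le_supersolution:
  assumes Q: "\<forall>X\<in>S - Sopt. \<forall>Y\<in>S - Sopt. 0 \<le> Q X Y" and d: "\<And>X. 0 \<le> d X"
    and super: "\<forall>X\<in>S - Sopt. 1 + (\<Sum>Y\<in>S - Sopt. Q X Y * d Y) \<le> d X"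
  shows "hit_time S Sopt Q X \<le> ennreal (d X)"
  unfolding hit_time_def
  by (rule suminf_ennreal_le_of_partial_sums[OF surv_nonneg[OF Q]
        sum_surv_le_supersolution[OF Q d super]])

lemma hit_time_le_supersolution_step:
  assumes Q: "\<forall>X\<in>S - Sopt. \<forall>Y\<in>S - Sopt. 0 \<le> Q X Y" and d: "\<And>X. 0 \<le> d X"
    and super: "\<forall>X\<in>S - Sopt. 1 + (\<Sum>Y\<in>S - Sopt. Q X Y * d Y) \<le> d X"
    and X: "X \<in> S - Sopt"
  shows "hit_time S Sopt Q X \<le> ennreal (1 + (\<Sum>Y\<in>S - Sopt. Q X Y * d Y))"
  unfolding hit_time_def
proof (rule suminf_ennreal_le_of_partial_sums[OF surv_nonneg[OF Q]])
  fix n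
  have step_nonneg: "0 \<le> 1 + (\<Sum>Y\<in>S - Sopt. Q X Y * d Y)"
    using Q d X by (auto intro!: add_nonneg_nonneg sum_nonneg)
  show "(\<Sum>t<n. surv (S - Sopt) Q t X) \<le> 1 + (\<Sum>Y\<in>S - Sopt. Q X Y * d Y)"
  proof (cases n)
    case 0
    then show ?thesis using step_nonneg by simp
  next
    case (Suc m)
    have "(\<Sum>t<Suc m. surv (S - Sopt) Q t X)
          = 1 + (\<Sum>Y\<in>S - Sopt. Q X Y * (\<Sum>t<m. surv (S - Sopt) Q t Y))"
      using X by (rule sum_surv_lessThan_Suc)
    also have "\<dots> \<le> 1 + (\<Sum>Y\<in>S - Sopt. Q X Y * d Y)"
      using sum_surv_le_supersolution[OF Q d super] Q X by (auto intro!: sum_mono mult_left_mono)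
    finally show ?thesis using Suc by simp
  qed
qed

lemma summable_surv_if_hit_time_finite:
  assumes P: "\<forall>X\<in>S - Sopt. \<forall>Y\<in>S - Sopt. 0 \<le> P X Y"
    and fin: "\<forall>X\<in>S. hit_time S Sopt P X < \<infinity>"
  shows "summable (\<lambda>t. surv (S - Sopt) P t X)"
proof (cases "X \<in> S")
  case True
  show ?thesis
  proof (rule summable_suminf_not_top)
    show "\<And>t. 0 \<le> surv (S - Sopt) P t X" using P by (rule surv_nonneg)
    show "(\<Sum>t. ennreal (surv (S - Sopt) P t X)) \<noteq> top"
      using fin True by (auto simp: hit_time_def)
  qed
next
  case False
  then show ?thesis by (simp add: surv_notin)
qed

lemma hit_time_eq_suminf:
  assumes P: "\<forall>X\<in>S - Sopt. \<forall>Y\<in>S - Sopt. 0 \<le> P X Y"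
    and fin: "\<forall>X\<in>S. hit_time S Sopt P X < \<infinity>"
  shows "hit_time S Sopt P X = ennreal (\<Sum>t. surv (S - Sopt) P t X)"
  unfolding hit_time_def
  using surv_nonneg[OF P] summable_surv_if_hit_time_finite[OF P fin]
  by (intro suminf_ennreal_eq) (auto intro: summable_sums)

lemma hit_time_first_step:
  assumes "finite S"
    and P: "\<forall>X\<in>S - Sopt. \<forall>Y\<in>S - Sopt. 0 \<le> P X Y"
    and fin: "\<forall>X\<in>S. hit_time S Sopt P X < \<infinity>"
    and X: "X \<in> S - Sopt"
  defines "d \<equiv> \<lambda>Y. enn2real (hit_time S Sopt P Y)"
  shows "d X = 1 + (\<Sum>Y\<in>S - Sopt. P X Y * d Y)"
proof -
  let ?N = "S - Sopt"
  have summ: "\<And>Y. summable (\<lambda>t. surv ?N P t Y)"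
    by (rule summable_surv_if_hit_time_finite[OF P fin])
  have d_eq: "d Y = (\<Sum>t. surv ?N P t Y)" for Y
    unfolding d_def hit_time_eq_suminf[OF P fin]
    by (simp add: suminf_nonneg summ surv_nonneg[OF P])
  have "d X = surv ?N P 0 X + (\<Sum>t. surv ?N P (Suc t) X)"
    unfolding d_eq using suminf_split_head[OF summ[of X]] by simp
  also have "\<dots> = 1 + (\<Sum>t. \<Sum>Y\<in>?N. P X Y * surv ?N P t Y)"
    using X by simp
  also have "\<dots> = 1 + (\<Sum>Y\<in>?N. \<Sum>t. P X Y * surv ?N P t Y)"
    using \<open>finite S\<close> by (subst suminf_sum) (auto intro: summable_mult summ)
  also have "\<dots> = 1 + (\<Sum>Y\<in>?N. P X Y * d Y)"
    by (simp add: d_eq suminf_mult summ)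
  finally show ?thesis .
qed

lemma hit_time_improvement:
  assumes "finite S"
    and P: "\<forall>X\<in>S - Sopt. \<forall>Y\<in>S - Sopt. 0 \<le> P X Y"
    and Q: "\<forall>X\<in>S - Sopt. \<forall>Y\<in>S - Sopt. 0 \<le> Q X Y"
    and fin: "\<forall>X\<in>S. hit_time S Sopt P X < \<infinity>"
  defines "d \<equiv> \<lambda>Y. enn2real (hit_time S Sopt P Y)"
  assumes le: "\<forall>X\<in>S - Sopt. (\<Sum>Y\<in>S - Sopt. Q X Y * d Y) \<le> (\<Sum>Y\<in>S - Sopt. P X Y * d Y)"
    and X0: "X0 \<in> S - Sopt"
    and less: "(\<Sum>Y\<in>S - Sopt. Q X0 Y * d Y) < (\<Sum>Y\<in>S - Sopt. P X0 Y * d Y)"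
  shows "hit_time S Sopt Q X \<le> hit_time S Sopt P X"
    and "hit_time S Sopt Q X0 < hit_time S Sopt P X0"
proof -
  let ?N = "S - Sopt"
  have first_step: "X \<in> ?N \<Longrightarrow> d X = 1 + (\<Sum>Y\<in>?N. P X Y * d Y)" for X
    unfolding d_def by (rule hit_time_first_step[OF assms(1) P fin])
  have hit_P: "hit_time S Sopt P X = ennreal (d X)" for X
    using fin by (cases "X \<in> S") (auto simp: d_def hit_time_def surv_notin less_top)
  have d_nonneg: "\<And>X. 0 \<le> d X" by (simp add: d_def)
  have super: "\<forall>X\<in>?N. 1 + (\<Sum>Y\<in>?N. Q X Y * d Y) \<le> d X"
  proof
    fix X assume "X \<in> ?N"
    then show "1 + (\<Sum>Y\<in>?N. Q X Y * d Y) \<le> d X"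
      using first_step[of X] le by auto
  qed
  show "hit_time S Sopt Q X \<le> hit_time S Sopt P X"
    unfolding hit_P by (rule hit_time_le_supersolution[OF Q d_nonneg super])
  have "hit_time S Sopt Q X0 \<le> ennreal (1 + (\<Sum>Y\<in>?N. Q X0 Y * d Y))"
    by (rule hit_time_le_supersolution_step[OF Q d_nonneg super X0])
  also have "\<dots> < ennreal (d X0)"
  proof (rule ennreal_lessI)
    have "0 \<le> (\<Sum>Y\<in>?N. P X0 Y * d Y)"
      using P X0 d_nonneg by (auto intro!: sum_nonneg)
    then show "0 < d X0" using first_step[OF X0] by linarith
    show "1 + (\<Sum>Y\<in>?N. Q X0 Y * d Y) < d X0" using first_step[OF X0] less by linarith
  qed
  finally show "hit_time S Sopt Q X0 < hit_time S Sopt P X0" by (simp only: hit_P)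
qed

theorem lemma3:
  fixes S Sopt :: "'a set" and P1 P2 :: "'a \<Rightarrow> 'a \<Rightarrow> real"
  assumes "finite S" and "Sopt \<subseteq> S"
    and "transition_matrix S Sopt P1" and "transition_matrix S Sopt P2"
    and "\<forall>X\<in>S. hit_time S Sopt P1 X < \<infinity>"
    and "\<exists>X\<in>S - Sopt.
           drift S Sopt (\<lambda>Y. enn2real (hit_time S Sopt P1 Y)) P1 X
         < drift S Sopt (\<lambda>Y. enn2real (hit_time S Sopt P1 Y)) P2 X"
  shows "\<exists>p :: 'a \<Rightarrow> real. (\<forall>X\<in>S. 0 \<le> p X \<and> p X \<le> 1) \<and>
           (\<forall>X\<in>S. hit_time S Sopt (mixed p P1 P2) X \<le> hit_time S Sopt P1 X) \<and>
           (\<exists>X\<in>S. hit_time S Sopt (mixed p P1 P2) X < hit_time S Sopt P1 X)"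
proof -
  let ?N = "S - Sopt"
  let ?d = "\<lambda>Y. enn2real (hit_time S Sopt P1 Y)"
  have P1: "\<forall>X\<in>?N. \<forall>Y\<in>?N. 0 \<le> P1 X Y" and P2: "\<forall>X\<in>?N. \<forall>Y\<in>?N. 0 \<le> P2 X Y"
    using assms(3,4) by (auto simp: transition_matrix_def)
  obtain X0 where X0: "X0 \<in> ?N"
    and gap: "(\<Sum>Y\<in>?N. P2 X0 Y * ?d Y) < (\<Sum>Y\<in>?N. P1 X0 Y * ?d Y)"
    using assms(6) by (auto simp: drift_def)
  define p where "p = (\<lambda>X. if X = X0 then 0 else (1::real))"
  have Q: "mixed p P1 P2 X = (if X = X0 then P2 X else P1 X)" for X
    by (simp add: mixed_def p_def fun_eq_iff)
  have Q_nonneg: "\<forall>X\<in>?N. \<forall>Y\<in>?N. 0 \<le> mixed p P1 P2 X Y"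
    using P1 P2 by (simp add: Q)
  have le: "\<forall>X\<in>?N. (\<Sum>Y\<in>?N. mixed p P1 P2 X Y * ?d Y) \<le> (\<Sum>Y\<in>?N. P1 X Y * ?d Y)"
    using gap by (simp add: Q)
  have less: "(\<Sum>Y\<in>?N. mixed p P1 P2 X0 Y * ?d Y) < (\<Sum>Y\<in>?N. P1 X0 Y * ?d Y)"
    using gap by (simp add: Q)
  show ?thesis
    using hit_time_improvement[OF assms(1) P1 Q_nonneg assms(5) le X0 less] X0 by (intro exI[of _ p]) (auto simp: p_def)
qed

end
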